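(* Let $W$ be a finite connected CW-complex, $Q$ the Hilbert cube, and let $\tilde\varphi: S^d\times W\times Q\to S^d\times W\times Q$, $\tilde\varphi(s,w)=(\varphi(s),h_s(w))$, be a minimal homeomorphism, where $h:S^d\to\mathrm{Homeo}(W\times Q)$ is continuous. Then the homeomorphism $\tilde\zeta: Z\times W\times Q\to Z\times W\times Q$, $\tilde\zeta(z,w)=(\zeta(z),h_{q(z)}(w))$, is minimal.
   Context: Fix an odd integer $d\ge3$ and a minimal diffeomorphism $\varphi:S^d\to S^d$. $(Z,\zeta)$ is the point-like minimal system of Deeley–Putnam–Strung associated to $\varphi$: there is a $\varphi$-invariant subset $L_\infty\subset S^d$ (the image of an injective immersion of $\mathbb{R}$); $Z$ is a compact metric space obtained by completing $S^d\setminus L_\infty$ with respect to a suitable metric, so that $S^d\setminus L_\infty$ is a dense subset of $Z$; $\zeta$ is the minimal homeomorphism of $Z$ extending $\varphi|_{S^d\setminus L_\infty}$; $Z$ has the Čech cohomology and $K$-theory of a point; and $q:Z\to S^d$ is an almost one-to-one factor map ($q\circ\zeta=\varphi\circ q$) which is the identity, in particular injective, on $S^d\setminus L_\infty$. A homeomorphism is minimal if it has no proper nonempty closed invariant subsets. *)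

theory Defs
  imports "HOL-Analysis.Analysis"
begin

definition minimal_homeo :: "'a topology \<Rightarrow> ('a \<Rightarrow> 'a) \<Rightarrow> bool" where
  "minimal_homeo X f \<longleftrightarrow> homeomorphic_map X X f \<and>
     (\<forall>A. closedin X A \<and> A \<noteq> {} \<and> f ` A = A \<longrightarrow> A = topspace X)"

definition disc :: "nat \<Rightarrow> (nat \<Rightarrow> real) set" where
  "disc n = {x. (\<forall>i\<ge>n. x i = 0) \<and> (\<Sum>i<n. (x i)^2) \<le> 1}"

definition open_disc :: "nat \<Rightarrow> (nat \<Rightarrow> real) set" where
  "open_disc n = {x. (\<forall>i\<ge>n. x i = 0) \<and> (\<Sum>i<n. (x i)^2) < 1}"

definition disc_top :: "nat \<Rightarrow> (nat \<Rightarrow> real) topology" where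
  "disc_top n = subtopology (Euclidean_space n) (disc n)"

text \<open>Finite CW complex: a Hausdorff space with finitely many cells, each given by a
  characteristic map from a closed disc which is a homeomorphism of the open disc onto
  the cell, the cells partition the space, and the boundary of each cell is mapped into
  the union of cells of lower dimension.  (For finitely many cells closure finiteness and
  the weak topology condition are automatic.)\<close>
definition finite_CW_complex :: "'a topology \<Rightarrow> bool" where
  "finite_CW_complex X \<longleftrightarrow> Hausdorff_space X \<and>
    (\<exists>(I::nat set) (dim::nat \<Rightarrow> nat) (\<Phi>::nat \<Rightarrow> (nat \<Rightarrow> real) \<Rightarrow> 'a).
       finite I \<and>
       (\<forall>i\<in>I. continuous_map (disc_top (dim i)) X (\<Phi> i) \<and>
               homeomorphic_map (subtopology (Euclidean_space (dim i)) (open_disc (dim i)))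
                                (subtopology X (\<Phi> i ` open_disc (dim i))) (\<Phi> i)) \<and>
       (\<forall>i\<in>I. \<forall>j\<in>I. i \<noteq> j \<longrightarrow> \<Phi> i ` open_disc (dim i) \<inter> \<Phi> j ` open_disc (dim j) = {}) \<and>
       (\<Union>i\<in>I. \<Phi> i ` open_disc (dim i)) = topspace X \<and>
       (\<forall>i\<in>I. \<Phi> i ` (disc (dim i) - open_disc (dim i)) \<subseteq>
                 (\<Union>j\<in>{j\<in>I. dim j < dim i}. \<Phi> j ` open_disc (dim j))))"

definition hilbert_cube :: "(nat \<Rightarrow> real) topology" where
  "hilbert_cube = product_topology (\<lambda>_. top_of_set {0..1}) UNIV"

end

theory Submission
  imports Defs
begin

text \<open>The skew product over \<zeta> is a homeomorphism because it is \<zeta> \<times> id composed with the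
  pull-back along q of the fibrewise part of the skew product over \<phi>.  For minimality,
  q \<times> id is a closed factor map onto the minimal skew product over \<phi> which is one-to-one
  over the dense set (S^d - L) \<times> W \<times> Q: the image of a closed invariant set is everything,
  so the set contains that dense set.\<close>

definition injectivity_points :: "'a topology \<Rightarrow> ('a \<Rightarrow> 'b) \<Rightarrow> 'a set" where
  "injectivity_points X f = {x \<in> topspace X. \<forall>y\<in>topspace X. f y = f x \<longrightarrow> y = x}"

definition almost_one_to_one :: "'a topology \<Rightarrow> ('a \<Rightarrow> 'b) \<Rightarrow> bool" where
  "almost_one_to_one X f \<longleftrightarrow> X closure_of injectivity_points X f = topspace X"

lemma homeomorphic_maps_prod_left:
  assumes "homeomorphic_maps S S f f'"
  shows "homeomorphic_maps (prod_topology S X) (prod_topology S X) (\<lambda>(s, x). (f s, x)) (\<lambda>(s, x). (f' s, x))"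
  using assms homeomorphic_maps_prod[of S X S X f "\<lambda>x. x" f' "\<lambda>x. x"] homeomorphic_maps_id[of X X]
  by (simp add: id_def)

lemma homeomorphic_map_skew_iff_fibrewise:
  assumes "homeomorphic_map S S \<phi>"
  shows "homeomorphic_map (prod_topology S X) (prod_topology S X) (\<lambda>(s, x). (\<phi> s, g s x)) \<longleftrightarrow>
         homeomorphic_map (prod_topology S X) (prod_topology S X) (\<lambda>(s, x). (s, g s x))"
proof -
  obtain \<phi>' where "homeomorphic_maps S S \<phi> \<phi>'"
    using assms homeomorphic_map_maps by blast
  then have \<Phi>: "homeomorphic_maps (prod_topology S X) (prod_topology S X) (\<lambda>(s, x). (\<phi> s, x)) (\<lambda>(s, x). (\<phi>' s, x))"
    and \<phi>'\<phi>: "\<And>s. s \<in> topspace S \<Longrightarrow> \<phi>' (\<phi> s) = s"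
    by (rule homeomorphic_maps_prod_left, simp add: homeomorphic_maps_def)
  have skew: "(\<lambda>(s, x). (\<phi> s, g s x)) = (\<lambda>(s, x). (\<phi> s, x)) \<circ> (\<lambda>(s, x). (s, g s x))"
    by auto
  have fibrewise: "((\<lambda>(s, x). (\<phi>' s, x)) \<circ> (\<lambda>(s, x). (\<phi> s, g s x))) p = (\<lambda>(s, x). (s, g s x)) p"
    if "p \<in> topspace (prod_topology S X)" for p
    using that \<phi>'\<phi> by auto
  have \<Phi>_homeo: "homeomorphic_map (prod_topology S X) (prod_topology S X) (\<lambda>(s, x). (\<phi> s, x))"
    and \<Phi>'_homeo: "homeomorphic_map (prod_topology S X) (prod_topology S X) (\<lambda>(s, x). (\<phi>' s, x))"
    using \<Phi> homeomorphic_maps_map by blast+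
  show ?thesis
  proof
    assume "homeomorphic_map (prod_topology S X) (prod_topology S X) (\<lambda>(s, x). (\<phi> s, g s x))"
    from homeomorphic_map_compose[OF this \<Phi>'_homeo] fibrewise
    show "homeomorphic_map (prod_topology S X) (prod_topology S X) (\<lambda>(s, x). (s, g s x))"
      by (rule homeomorphic_map_eq)
  next
    assume "homeomorphic_map (prod_topology S X) (prod_topology S X) (\<lambda>(s, x). (s, g s x))"
    from homeomorphic_map_compose[OF this \<Phi>_homeo]
    show "homeomorphic_map (prod_topology S X) (prod_topology S X) (\<lambda>(s, x). (\<phi> s, g s x))"
      by (simp only: skew)
  qed
qed

lemma continuous_map_fibrewise_pullback:
  assumes g: "continuous_map (prod_topology S X) X (\<lambda>(s, x). g s x)" and p: "continuous_map Z S p"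
  shows "continuous_map (prod_topology Z X) (prod_topology Z X) (\<lambda>(z, x). (z, g (p z) x))"
proof -
  have "continuous_map (prod_topology Z X) (prod_topology S X) (\<lambda>(z, x). (p z, x))"
    using continuous_map_prod_top[of Z X S X p "\<lambda>x. x"] p by simp
  from continuous_map_compose[OF this g]
  have "continuous_map (prod_topology Z X) X (\<lambda>(z, x). g (p z) x)"
    by (simp add: o_def case_prod_unfold)
  then show ?thesis
    by (simp add: case_prod_unfold continuous_map_pairedI continuous_map_fst)
qed

lemma homeomorphic_map_fibrewise_pullback:
  assumes H: "homeomorphic_map (prod_topology S X) (prod_topology S X) (\<lambda>(s, x). (s, g s x))"
    and p: "continuous_map Z S p"
  shows "homeomorphic_map (prod_topology Z X) (prod_topology Z X) (\<lambda>(z, x). (z, g (p z) x))"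
proof -
  obtain H' where H': "homeomorphic_maps (prod_topology S X) (prod_topology S X) (\<lambda>(s, x). (s, g s x)) H'"
    using H homeomorphic_map_maps by blast
  define k where "k = (\<lambda>s x. snd (H' (s, x)))"
  have H'_fibrewise: "H' (s, x) = (s, k s x)" and g_k: "g s (k s x) = x"
    if "s \<in> topspace S" "x \<in> topspace X" for s x
  proof -
    have "(\<lambda>(s, x). (s, g s x)) (H' (s, x)) = (s, x)"
      using H' that by (simp add: homeomorphic_maps_def)
    then show "H' (s, x) = (s, k s x)" "g s (k s x) = x"
      by (auto simp: k_def split: prod.splits)
  qed
  have k_g: "k s (g s x) = x" if "s \<in> topspace S" "x \<in> topspace X" for s x
    using H' that by (simp add: homeomorphic_maps_def k_def)
  have "continuous_map (prod_topology S X) X (\<lambda>(s, x). g s x)"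
    using continuous_map_compose[OF homeomorphic_imp_continuous_map[OF H] continuous_map_snd]
    by (simp add: o_def case_prod_unfold)
  then have fwd: "continuous_map (prod_topology Z X) (prod_topology Z X) (\<lambda>(z, x). (z, g (p z) x))"
    using p by (rule continuous_map_fibrewise_pullback)
  have "continuous_map (prod_topology S X) X (\<lambda>(s, x). k s x)"
    using continuous_map_compose[OF homeomorphic_maps_map[THEN iffD1, OF H', THEN conjunct2,
          THEN conjunct1, THEN homeomorphic_imp_continuous_map] continuous_map_snd]
    by (simp add: o_def case_prod_unfold k_def)
  then have bwd: "continuous_map (prod_topology Z X) (prod_topology Z X) (\<lambda>(z, x). (z, k (p z) x))"
    using p by (rule continuous_map_fibrewise_pullback)
  have pZ: "\<And>z. z \<in> topspace Z \<Longrightarrow> p z \<in> topspace S"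
    using p by (auto simp: continuous_map_def)
  have "homeomorphic_maps (prod_topology Z X) (prod_topology Z X) (\<lambda>(z, x). (z, g (p z) x)) (\<lambda>(z, x). (z, k (p z) x))"
    using fwd bwd by (auto simp: homeomorphic_maps_def pZ g_k k_g)
  then show ?thesis
    using homeomorphic_map_maps by blast
qed

lemma closed_map_prod_left_of_compact:
  assumes "compact_space Z" "Hausdorff_space S" "continuous_map Z S q"
  shows "closed_map (prod_topology Z X) (prod_topology S X) (\<lambda>(z, x). (q z, x))"
proof -
  have "proper_map Z S q"
    using assms by (simp add: Hausdorff_imp_kc_space continuous_imp_proper_map)
  then have "proper_map (prod_topology Z X) (prod_topology S X) (\<lambda>(z, x). (q z, id x))"
    by (simp add: proper_map_prod proper_map_id[unfolded id_def])
  then show ?thesis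
    by (simp add: proper_imp_closed_map)
qed

lemma almost_one_to_one_prod_left:
  assumes "almost_one_to_one Z q"
  shows "almost_one_to_one (prod_topology Z X) (\<lambda>(z, x). (q z, x))"
proof -
  let ?E = "injectivity_points (prod_topology Z X) (\<lambda>(z, x). (q z, x))"
  have "injectivity_points Z q \<times> topspace X \<subseteq> ?E"
    by (auto simp: injectivity_points_def)
  then have "prod_topology Z X closure_of (injectivity_points Z q \<times> topspace X) \<subseteq> prod_topology Z X closure_of ?E"
    by (rule closure_of_mono)
  then have "topspace (prod_topology Z X) \<subseteq> prod_topology Z X closure_of ?E"
    using assms by (simp add: closure_of_Times almost_one_to_one_def)
  then show ?thesis
    unfolding almost_one_to_one_def by (meson closure_of_subset_topspace subset_antisym)
qed

lemma almost_one_to_one_of_dense_section: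
  assumes dense: "Z closure_of (\<iota> ` U) = topspace Z" and into: "\<iota> ` U \<subseteq> topspace Z"
    and q_\<iota>: "\<And>u. u \<in> U \<Longrightarrow> q (\<iota> u) = u"
    and fibre: "\<And>z. z \<in> topspace Z \<Longrightarrow> q z \<in> U \<Longrightarrow> z \<in> \<iota> ` U"
  shows "almost_one_to_one Z q"
proof -
  have "\<iota> ` U \<subseteq> injectivity_points Z q"
  proof (rule image_subsetI)
    fix u assume u: "u \<in> U"
    have "y = \<iota> u" if "y \<in> topspace Z" "q y = q (\<iota> u)" for y
    proof -
      have "y \<in> \<iota> ` U"
        using fibre[OF that(1)] that(2) q_\<iota>[OF u] u by simp
      then obtain u' where "u' \<in> U" "y = \<iota> u'"
        by (rule imageE)
      then show ?thesis
        using that(2) q_\<iota>[OF u] q_\<iota>[OF \<open>u' \<in> U\<close>] by simp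
    qed
    then show "\<iota> u \<in> injectivity_points Z q"
      using into u by (auto simp: injectivity_points_def)
  qed
  from closure_of_mono[OF this, of Z] have "topspace Z \<subseteq> Z closure_of injectivity_points Z q"
    by (simp only: dense)
  then show ?thesis
    unfolding almost_one_to_one_def by (meson closure_of_subset_topspace subset_antisym)
qed

lemma minimal_homeo_almost_one_to_one_extension:
  assumes g: "minimal_homeo Y g" and f: "homeomorphic_map X X f"
    and \<pi>_closed: "closed_map X Y \<pi>" and \<pi>_a11: "almost_one_to_one X \<pi>"
    and factor: "\<And>x. x \<in> topspace X \<Longrightarrow> \<pi> (f x) = g (\<pi> x)"
  shows "minimal_homeo X f"
  unfolding minimal_homeo_def
proof (intro conjI f allI impI)
  fix A assume A: "closedin X A \<and> A \<noteq> {} \<and> f ` A = A"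
  then have A_sub: "A \<subseteq> topspace X"
    by (simp add: closedin_subset)
  have "g ` (\<pi> ` A) = \<pi> ` (f ` A)"
    using A_sub factor by (force simp: image_comp intro: image_cong)
  then have "g ` (\<pi> ` A) = \<pi> ` A"
    using A by simp
  moreover have "closedin Y (\<pi> ` A)"
    using \<pi>_closed A by (simp add: closed_map_def)
  moreover have "\<pi> ` A \<noteq> {}"
    using A by simp
  moreover have "\<forall>B. closedin Y B \<and> B \<noteq> {} \<and> g ` B = B \<longrightarrow> B = topspace Y"
    using g by (simp add: minimal_homeo_def)
  ultimately have \<pi>A: "\<pi> ` A = topspace Y"
    by blast
  have "closedin Y (\<pi> ` topspace X)"
    using \<pi>_closed by (simp add: closed_map_def)
  then have \<pi>X: "\<pi> ` topspace X \<subseteq> topspace Y"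
    by (rule closedin_subset)
  have "injectivity_points X \<pi> \<subseteq> A"
  proof
    fix x assume x: "x \<in> injectivity_points X \<pi>"
    then have "\<pi> x \<in> \<pi> ` A"
      using \<pi>A \<pi>X by (auto simp: injectivity_points_def)
    then obtain a where "a \<in> A" "\<pi> a = \<pi> x"
      by (metis imageE)
    with x A_sub show "x \<in> A"
      by (auto simp: injectivity_points_def)
  qed
  from closure_of_minimal[OF this, of X] have "topspace X \<subseteq> A"
    using \<pi>_a11 A by (simp add: almost_one_to_one_def)
  then show "A = topspace X"
    using A_sub by blast
qed

theorem proposition2p8:
  fixes d :: nat
    and \<phi> :: "(nat \<Rightarrow> real) \<Rightarrow> (nat \<Rightarrow> real)"
    and L :: "(nat \<Rightarrow> real) set"
    and \<gamma> :: "real \<Rightarrow> (nat \<Rightarrow> real)"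
    and Z :: "'z topology"
    and \<zeta> :: "'z \<Rightarrow> 'z"
    and \<iota> :: "(nat \<Rightarrow> real) \<Rightarrow> 'z"
    and q :: "'z \<Rightarrow> (nat \<Rightarrow> real)"
    and W :: "'w topology"
    and h :: "(nat \<Rightarrow> real) \<Rightarrow> ('w \<times> (nat \<Rightarrow> real)) \<Rightarrow> ('w \<times> (nat \<Rightarrow> real))"
  assumes d_odd: "odd d" and d_ge: "d \<ge> 3"
    \<comment> \<open>the minimal homeomorphism (diffeomorphism) of S^d\<close>
    and phi_min: "minimal_homeo (nsphere d) \<phi>"
    \<comment> \<open>L_\<infinity>: phi-invariant image of an injective continuous map R -> S^d\<close>
    and gamma_cont: "continuous_map euclideanreal (nsphere d) \<gamma>"
    and gamma_inj: "inj \<gamma>"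
    and L_def: "L = range \<gamma>"
    and L_inv: "\<phi> ` L = L"
    \<comment> \<open>Z: compact metric space containing S^d - L as a dense subset (via the inclusion iota)\<close>
    and Z_compact: "compact_space Z"
    and Z_metr: "metrizable_space Z"
    and iota_inj: "inj_on \<iota> (topspace (nsphere d) - L)"
    and iota_into: "\<iota> ` (topspace (nsphere d) - L) \<subseteq> topspace Z"
    and iota_dense: "Z closure_of (\<iota> ` (topspace (nsphere d) - L)) = topspace Z"
    \<comment> \<open>zeta: minimal homeomorphism of Z extending phi restricted to S^d - L\<close>
    and zeta_min: "minimal_homeo Z \<zeta>"
    and zeta_ext: "\<And>x. x \<in> topspace (nsphere d) - L \<Longrightarrow> \<zeta> (\<iota> x) = \<iota> (\<phi> x)"
    \<comment> \<open>q: almost one-to-one factor map Z -> S^d, the identity on S^d - L\<close>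
    and q_cont: "continuous_map Z (nsphere d) q"
    and q_surj: "q ` topspace Z = topspace (nsphere d)"
    and q_factor: "\<And>z. z \<in> topspace Z \<Longrightarrow> q (\<zeta> z) = \<phi> (q z)"
    and q_id: "\<And>x. x \<in> topspace (nsphere d) - L \<Longrightarrow> q (\<iota> x) = x"
    and q_fibre: "\<And>z. z \<in> topspace Z \<Longrightarrow> q z \<notin> L \<Longrightarrow> z \<in> \<iota> ` (topspace (nsphere d) - L)"
    \<comment> \<open>W: finite connected CW complex\<close>
    and W_CW: "finite_CW_complex W"
    and W_conn: "connected_space W"
    \<comment> \<open>h : S^d -> Homeo(W x Q) continuous\<close>
    and h_homeo: "\<And>s. s \<in> topspace (nsphere d) \<Longrightarrow>
                    homeomorphic_map (prod_topology W hilbert_cube) (prod_topology W hilbert_cube) (h s)"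
    and h_cont: "continuous_map (prod_topology (nsphere d) (prod_topology W hilbert_cube))
                   (prod_topology W hilbert_cube) (\<lambda>(s, x). h s x)"
    \<comment> \<open>the skew product over phi is minimal\<close>
    and skew_min: "minimal_homeo (prod_topology (nsphere d) (prod_topology W hilbert_cube))
                     (\<lambda>(s, x). (\<phi> s, h s x))"
  shows "minimal_homeo (prod_topology Z (prod_topology W hilbert_cube))
           (\<lambda>(z, x). (\<zeta> z, h (q z) x))"
proof -
  let ?X = "prod_topology W hilbert_cube"
  have \<phi>: "homeomorphic_map (nsphere d) (nsphere d) \<phi>" and \<zeta>: "homeomorphic_map Z Z \<zeta>"
    using phi_min zeta_min by (simp_all add: minimal_homeo_def)
  have "homeomorphic_map (prod_topology (nsphere d) ?X) (prod_topology (nsphere d) ?X) (\<lambda>(s, x). (\<phi> s, h s x))"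
    using skew_min by (simp add: minimal_homeo_def)
  then have "homeomorphic_map (prod_topology (nsphere d) ?X) (prod_topology (nsphere d) ?X) (\<lambda>(s, x). (s, h s x))"
    by (rule homeomorphic_map_skew_iff_fibrewise[OF \<phi>, THEN iffD1])
  then have "homeomorphic_map (prod_topology Z ?X) (prod_topology Z ?X) (\<lambda>(z, x). (z, h (q z) x))"
    using q_cont by (rule homeomorphic_map_fibrewise_pullback)
  then have skew_homeo: "homeomorphic_map (prod_topology Z ?X) (prod_topology Z ?X) (\<lambda>(z, x). (\<zeta> z, h (q z) x))"
    by (rule homeomorphic_map_skew_iff_fibrewise[OF \<zeta>, THEN iffD2])
  have q_a11: "almost_one_to_one Z q"
  proof (rule almost_one_to_one_of_dense_section[OF iota_dense iota_into])
    show "q (\<iota> s) = s" if "s \<in> topspace (nsphere d) - L" for s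
      using q_id that .
    show "z \<in> \<iota> ` (topspace (nsphere d) - L)" if "z \<in> topspace Z" "q z \<in> topspace (nsphere d) - L" for z
      using that by (intro q_fibre) auto
  qed
  have "Hausdorff_space (nsphere d)"
    unfolding nsphere_def by (rule Hausdorff_space_subtopology[OF Hausdorff_Euclidean_space])
  then have q_closed: "closed_map (prod_topology Z ?X) (prod_topology (nsphere d) ?X) (\<lambda>(z, x). (q z, x))"
    using Z_compact q_cont by (simp add: closed_map_prod_left_of_compact)
  show ?thesis
  proof (rule minimal_homeo_almost_one_to_one_extension
      [OF skew_min skew_homeo q_closed almost_one_to_one_prod_left[OF q_a11]])
    fix p assume "p \<in> topspace (prod_topology Z ?X)"
    then show "(\<lambda>(z, x). (q z, x)) ((\<lambda>(z, x). (\<zeta> z, h (q z) x)) p) = (\<lambda>(s, x). (\<phi> s, h s x)) ((\<lambda>(z, x). (q z, x)) p)"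
      using q_factor by (auto split: prod.splits)
  qed
qed

end
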